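(* Let $d\ge 7$ be odd and let ${\rm F}_d\subset\mathbb{P}^3(\mathbb{C})$ be the Fermat surface $x^d-y^d-z^d+w^d=0$. Then the maximal number of pairwise disjoint lines contained in ${\rm F}_d$ equals $3d$. *)

theory Defs
  imports "HOL-Analysis.Analysis"
begin

text \<open>Homogeneous coordinates (x,y,z,w) of P^3(C) are vectors in complex^4,
  with x = v$1, y = v$2, z = v$3, w = v$4.  A projective line is the
  cone of a 2-dimensional complex linear subspace of C^4, i.e. the complex
  span of two C-linearly independent vectors.\<close>

definition cspan2 :: "complex^4 \<Rightarrow> complex^4 \<Rightarrow> (complex^4) set" where
  "cspan2 p q = {a *s p + b *s q | a b. True}"

definition proj_line :: "(complex^4) set \<Rightarrow> bool" where
  "proj_line L \<longleftrightarrow> (\<exists>p q. (\<forall>a b. a *s p + b *s q = 0 \<longrightarrow> a = 0 \<and> b = 0)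
                            \<and> L = cspan2 p q)"

definition fermat :: "nat \<Rightarrow> complex^4 \<Rightarrow> bool" where
  "fermat d v \<longleftrightarrow> (v$1)^d - (v$2)^d - (v$3)^d + (v$4)^d = 0"

definition line_on_fermat :: "nat \<Rightarrow> (complex^4) set \<Rightarrow> bool" where
  "line_on_fermat d L \<longleftrightarrow> proj_line L \<and> (\<forall>v\<in>L. fermat d v)"

text \<open>Two projective lines are disjoint iff the subspaces meet only in 0.\<close>
definition disjoint_lines_on_fermat :: "nat \<Rightarrow> (complex^4) set set \<Rightarrow> bool" where
  "disjoint_lines_on_fermat d S \<longleftrightarrow>
     (\<forall>L\<in>S. line_on_fermat d L) \<and> pairwise (\<lambda>L M. L \<inter> M = {0}) S"

end

theory Submission
  imports Defs
begin

(* Write a line on F_d in two of its coordinates as (s, t, \<alpha> s + \<beta> t, \<gamma> s + \<delta> t). Comparing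
   the coefficients of s t^(d-1), s^2 t^(d-2) and s^(d-1) t in the Fermat equation forces
   \<alpha> = \<delta> = 0 or \<beta> = \<gamma> = 0, so the line meets two opposite edges of the coordinate
   tetrahedron, one of which passes through (1:0:0:0). The three edges through (1:0:0:0) meet
   F_d in 3d points, and disjoint lines contain distinct ones: at most 3d disjoint lines.
   Conversely the lines x = \<zeta>^a y, z = \<zeta>^b w, and their analogues pairing x with z or w,
   lie on F_d for d-th roots of unity; their disjointness is a condition on the exponents
   modulo d, met by explicit choices of d exponent pairs per family for d = 7 and all odd d \<ge> 9. *)

section \<open>Lines on the Fermat surface meet an edge of the coordinate tetrahedron\<close>

lemma power_identity_coeff_eq_0:
  fixes c1 c2 c3 c4 \<alpha> \<beta> \<gamma> \<delta> :: "'a::real_normed_field"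
  assumes H: "\<forall>s t. c1 * s^d + c2 * t^d + c3 * (\<alpha> * s + \<beta> * t)^d + c4 * (\<gamma> * s + \<delta> * t)^d = 0"
    and q: "0 < q" "q < d"
  shows "c3 * \<alpha>^q * \<beta>^(d-q) + c4 * \<gamma>^q * \<delta>^(d-q) = 0"
proof -
  define cf where "cf i = (if i = d then c1 else 0) + (if i = 0 then c2 else 0)
      + of_nat (d choose i) * (c3 * \<alpha>^i * \<beta>^(d-i) + c4 * \<gamma>^i * \<delta>^(d-i))" for i
  have "(\<Sum>i\<le>d. cf i * s^i) = 0" for s
  proof -
    have binom: "(u * s + v)^d = (\<Sum>i\<le>d. of_nat (d choose i) * (u^i * v^(d-i)) * s^i)" for u v :: 'a
      by (simp add: binomial_ring power_mult_distrib mult_ac)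
    have "(\<Sum>i\<le>d. cf i * s^i) = c1 * s^d + c2 + c3 * (\<alpha> * s + \<beta>)^d + c4 * (\<gamma> * s + \<delta>)^d"
      unfolding binom cf_def
      by (simp add: sum.distrib sum_distrib_left algebra_simps if_distrib[of "\<lambda>x. _ * x"] cong: if_cong)
    with H[rule_format, of s 1] show ?thesis by simp
  qed
  then have "cf q = 0" using polyfun_eq_0[of cf d] q by auto
  then show ?thesis using q by (simp add: cf_def)
qed

lemma power_identity_some_coeff_eq_0:
  fixes c1 c2 c3 c4 \<alpha> \<beta> \<gamma> \<delta> :: "'a::real_normed_field"
  assumes H: "\<forall>s t. c1 * s^d + c2 * t^d + c3 * (\<alpha> * s + \<beta> * t)^d + c4 * (\<gamma> * s + \<delta> * t)^d = 0"
    and d: "3 \<le> d" and nz: "c2 \<noteq> 0" "c4 \<noteq> 0"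
  shows "\<alpha> = 0 \<or> \<beta> = 0 \<or> \<gamma> = 0 \<or> \<delta> = 0"
proof (rule ccontr)
  assume "\<not> ?thesis"
  then have nz': "\<alpha> \<noteq> 0" "\<beta> \<noteq> 0" "\<gamma> \<noteq> 0" "\<delta> \<noteq> 0" by auto
  define e where "e = d - 2"
  have de: "d = e + 2" and e: "0 < e" using d by (simp_all add: e_def)
  have coeff1: "c3 * \<alpha> * \<beta>^(e+1) + c4 * \<gamma> * \<delta>^(e+1) = 0"
    using power_identity_coeff_eq_0[OF H, of 1] de by simp
  have coeff2: "c3 * \<alpha>^2 * \<beta>^e + c4 * \<gamma>^2 * \<delta>^e = 0"
    using power_identity_coeff_eq_0[OF H, of 2] de e by simp
  \<comment> \<open>the forms are proportional, which kills c3 \<beta>^d + c4 \<delta>^d and leaves c2 as the coefficient of t^d\<close>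
  have "c4 * \<gamma> * \<delta>^e * (\<alpha> * \<delta> - \<beta> * \<gamma>)
      = \<alpha> * (c3 * \<alpha> * \<beta>^(e+1) + c4 * \<gamma> * \<delta>^(e+1)) - \<beta> * (c3 * \<alpha>^2 * \<beta>^e + c4 * \<gamma>^2 * \<delta>^e)"
    by (simp add: algebra_simps power2_eq_square)
  then have proportional: "\<alpha> * \<delta> = \<beta> * \<gamma>"
    using coeff1 coeff2 nz nz' by simp
  have "\<delta> * (c3 * \<alpha> * \<beta>^(e+1) + c4 * \<gamma> * \<delta>^(e+1)) = c3 * (\<alpha> * \<delta>) * \<beta>^(e+1) + c4 * \<gamma> * \<delta>^(e+2)"
    by (simp add: algebra_simps)
  also have "\<dots> = \<gamma> * (c3 * \<beta>^d + c4 * \<delta>^d)"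
    unfolding proportional de by (simp add: algebra_simps)
  finally have "c3 * \<beta>^d + c4 * \<delta>^d = 0"
    using coeff1 nz' by simp
  moreover have "c2 + c3 * \<beta>^d + c4 * \<delta>^d = 0"
    using H[rule_format, of 0 1] d by (simp add: power_0_left)
  ultimately show False using nz by (simp add: add.assoc)
qed

lemma power_identity_split:
  fixes c1 c2 c3 c4 \<alpha> \<beta> \<gamma> \<delta> :: "'a::real_normed_field"
  assumes H: "\<forall>s t. c1 * s^d + c2 * t^d + c3 * (\<alpha> * s + \<beta> * t)^d + c4 * (\<gamma> * s + \<delta> * t)^d = 0"
    and d: "3 \<le> d" and nz: "c1 \<noteq> 0" "c2 \<noteq> 0" "c3 \<noteq> 0" "c4 \<noteq> 0"
  shows "(\<alpha> = 0 \<and> \<delta> = 0) \<or> (\<beta> = 0 \<and> \<gamma> = 0)"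
proof -
  have at10: "c1 + c3 * \<alpha>^d + c4 * \<gamma>^d = 0" using H[rule_format, of 1 0] d by (simp add: power_0_left)
  have at01: "c2 + c3 * \<beta>^d + c4 * \<delta>^d = 0" using H[rule_format, of 0 1] d by (simp add: power_0_left)
  have first: "c3 * \<alpha> * \<beta>^(d-1) + c4 * \<gamma> * \<delta>^(d-1) = 0"
    using power_identity_coeff_eq_0[OF H, of 1] d by simp
  have last: "c3 * \<alpha>^(d-1) * \<beta> + c4 * \<gamma>^(d-1) * \<delta> = 0"
    using power_identity_coeff_eq_0[OF H, of "d-1"] d by simp
  have "\<alpha> = 0 \<longleftrightarrow> \<delta> = 0"
  proof
    assume "\<alpha> = 0"
    with first at10 nz d show "\<delta> = 0" by (auto simp: power_0_left)
  next
    assume "\<delta> = 0"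
    with last at01 nz d show "\<alpha> = 0" by (auto simp: power_0_left)
  qed
  moreover have "\<beta> = 0 \<longleftrightarrow> \<gamma> = 0"
  proof
    assume "\<beta> = 0"
    with last at01 nz d show "\<gamma> = 0" by (auto simp: power_0_left)
  next
    assume "\<gamma> = 0"
    with first at10 nz d show "\<beta> = 0" by (auto simp: power_0_left)
  qed
  ultimately show ?thesis using power_identity_some_coeff_eq_0[OF H d nz(2,4)] by blast
qed

definition fermat_sign :: "4 \<Rightarrow> complex" where
  "fermat_sign n = (if n = 1 \<or> n = 4 then 1 else -1)"

lemma fermat_iff_sum: "fermat d v \<longleftrightarrow> (\<Sum>n\<in>UNIV. fermat_sign n * (v$n)^d) = 0"
  unfolding fermat_def sum_4 fermat_sign_def by (simp add: algebra_simps)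

lemma fermat_sign_neq_0 [simp]: "fermat_sign n \<noteq> 0"
  by (simp add: fermat_sign_def)

lemma UNIV_4_distinct:
  fixes i j k l :: 4
  assumes "distinct [i, j, k, l]"
  shows "UNIV = {i, j, k, l}"
proof -
  have "{i, j, k, l} = UNIV"
    by (rule card_subset_eq) (use assms in simp_all)
  then show ?thesis by simp
qed

lemma sum_UNIV_4_distinct:
  fixes i j k l :: 4
  assumes "distinct [i, j, k, l]"
  shows "(\<Sum>n\<in>UNIV. f n) = f i + f j + f k + f l"
  using assms unfolding UNIV_4_distinct[OF assms] by (simp add: algebra_simps)

lemma vec_4_eq_0_iff:
  fixes v :: "'a::zero^4"
  assumes "distinct [i, j, k, l]"
  shows "v = 0 \<longleftrightarrow> v$i = 0 \<and> v$j = 0 \<and> v$k = 0 \<and> v$l = 0"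
  using UNIV_4_distinct[OF assms] by (auto simp: vec_eq_iff)

lemma ex_fresh_index_4:
  fixes xs :: "4 list"
  assumes "length xs < 4"
  shows "\<exists>y. y \<notin> set xs"
proof -
  have "card (set xs) < CARD(4)" using card_length[of xs] assms by simp
  then have "set xs \<noteq> UNIV" by auto
  then show ?thesis by auto
qed

lemma lincomb_in_cspan2:
  assumes "a \<in> cspan2 p q" "b \<in> cspan2 p q"
  shows "s *s a + t *s b \<in> cspan2 p q"
proof -
  obtain a1 a2 b1 b2 where "a = a1 *s p + a2 *s q" "b = b1 *s p + b2 *s q"
    using assms unfolding cspan2_def by blast
  then have "s *s a + t *s b = (s * a1 + t * b1) *s p + (s * a2 + t * b2) *s q"
    by (simp add: vec_eq_iff algebra_simps)
  then show ?thesis unfolding cspan2_def by blast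
qed

lemma cspan2_dual_pair:
  assumes "p$i * q$j - p$j * q$i \<noteq> 0"
  shows "\<exists>a\<in>cspan2 p q. \<exists>b\<in>cspan2 p q. a$i = 1 \<and> a$j = 0 \<and> b$i = 0 \<and> b$j = 1"
proof -
  define D where "D = p$i * q$j - p$j * q$i"
  define a where "a = (q$j / D) *s p + (- p$j / D) *s q"
  define b where "b = (- q$i / D) *s p + (p$i / D) *s q"
  have "D \<noteq> 0" using assms by (simp add: D_def)
  then have "a$i = 1" "a$j = 0" "b$i = 0" "b$j = 1"
    by (simp_all add: a_def b_def D_def divide_simps)
  moreover have "a \<in> cspan2 p q" "b \<in> cspan2 p q"
    unfolding a_def b_def cspan2_def by blast+
  ultimately show ?thesis by blast
qed

lemma independent_imp_minor_neq_0:
  fixes p q :: "complex^4"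
  assumes "\<forall>a b. a *s p + b *s q = 0 \<longrightarrow> a = 0 \<and> b = 0"
  shows "\<exists>i j. p$i * q$j - p$j * q$i \<noteq> 0"
proof (rule ccontr)
  assume "\<not> ?thesis"
  then have minors: "p$i * q$j - p$j * q$i = 0" for i j by auto
  have "p \<noteq> 0" using assms[rule_format, of 1 0] by auto
  then obtain i where "p$i \<noteq> 0" by (auto simp: vec_eq_iff)
  moreover have "(q$i) *s p + (- p$i) *s q = 0"
    using minors[of i] by (simp add: vec_eq_iff algebra_simps)
  ultimately show False using assms[rule_format, of "q$i" "- p$i"] by simp
qed

lemma fermat_line_meets_opposite_edges:
  assumes L: "line_on_fermat d L" and d: "3 \<le> d"
  shows "\<exists>i j k l. distinct [i, j, k, l] \<and>
    (\<exists>v\<in>L. v$i = 1 \<and> v$j = 0 \<and> v$k = 0) \<and> (\<exists>w\<in>L. w$j = 1 \<and> w$i = 0 \<and> w$l = 0)"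
proof -
  obtain p q where indep: "\<forall>a b. a *s p + b *s q = 0 \<longrightarrow> a = 0 \<and> b = 0" and Lpq: "L = cspan2 p q"
    using L unfolding line_on_fermat_def proj_line_def by blast
  obtain i j where "p$i * q$j - p$j * q$i \<noteq> 0"
    using independent_imp_minor_neq_0[OF indep] by blast
  then obtain a b where ab: "a \<in> L" "b \<in> L" "a$i = 1" "a$j = 0" "b$i = 0" "b$j = 1"
    using cspan2_dual_pair Lpq by blast
  then have "i \<noteq> j" by auto
  moreover obtain k where "k \<notin> set [i, j]" using ex_fresh_index_4[of "[i, j]"] by auto
  moreover obtain l where "l \<notin> set [i, j, k]" using ex_fresh_index_4[of "[i, j, k]"] by auto
  ultimately have ijkl: "distinct [i, j, k, l]" by auto
  have "\<forall>s t. fermat_sign i * s^d + fermat_sign j * t^d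
      + fermat_sign k * (a$k * s + b$k * t)^d + fermat_sign l * (a$l * s + b$l * t)^d = 0"
  proof (intro allI)
    fix s t
    have "fermat d (s *s a + t *s b)"
      using L ab Lpq lincomb_in_cspan2 unfolding line_on_fermat_def by blast
    then have "(\<Sum>n\<in>UNIV. fermat_sign n * ((s *s a + t *s b)$n)^d) = 0"
      by (simp only: fermat_iff_sum)
    then show "fermat_sign i * s^d + fermat_sign j * t^d
      + fermat_sign k * (a$k * s + b$k * t)^d + fermat_sign l * (a$l * s + b$l * t)^d = 0"
      using ab by (simp add: sum_UNIV_4_distinct[OF ijkl] mult.commute)
  qed
  from power_identity_split[OF this d] have "(a$k = 0 \<and> b$l = 0) \<or> (b$k = 0 \<and> a$l = 0)"
    by simp
  then show ?thesis
  proof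
    assume "a$k = 0 \<and> b$l = 0"
    then show ?thesis using ijkl ab by blast
  next
    assume "b$k = 0 \<and> a$l = 0"
    moreover have "distinct [i, j, l, k]" using ijkl by auto
    ultimately show ?thesis using ab by blast
  qed
qed

lemma fermat_line_meets_edge_through_e1:
  assumes "line_on_fermat d L" "3 \<le> d"
  shows "\<exists>v\<in>L. v \<noteq> 0 \<and> (\<exists>a b. distinct [1, a, b] \<and> v$a = 0 \<and> v$b = 0)"
proof -
  obtain i j k l v w where ijkl: "distinct [i, j, k, l]"
    and v: "v \<in> L" "v$i = 1" "v$j = 0" "v$k = 0" and w: "w \<in> L" "w$j = 1" "w$i = 0" "w$l = 0"
    using fermat_line_meets_opposite_edges[OF assms] by blast
  show ?thesis
  proof (cases "1 \<in> {j, k}")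
    case True
    then have "distinct [1, i, l]" using ijkl by auto
    moreover have "w \<noteq> 0" using w by (metis zero_index zero_neq_one)
    ultimately show ?thesis using w by blast
  next
    case False
    then have "distinct [1, j, k]" using ijkl by auto
    moreover have "v \<noteq> 0" using v by (metis zero_index zero_neq_one)
    ultimately show ?thesis using v by blast
  qed
qed

section \<open>At most 3d disjoint lines\<close>

definition edge_point :: "4 \<Rightarrow> complex \<Rightarrow> complex^4" where
  "edge_point c z = axis 1 z + axis c 1"

text \<open>The points where F_d meets the three coordinate lines through (1:0:0:0), each
  normalised by its second nonzero coordinate.\<close>

definition edge_points :: "nat \<Rightarrow> (complex^4) set" where
  "edge_points d = (\<Union>c\<in>{2, 3, 4}. edge_point c ` {z. z^d = - fermat_sign c})"

lemma edge_point_nth: "c \<noteq> 1 \<Longrightarrow> edge_point c z $ n = (if n = 1 then z else if n = c then 1 else 0)"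
  by (simp add: edge_point_def axis_def)

lemma edge_point_neq_0: "c \<noteq> 1 \<Longrightarrow> edge_point c z \<noteq> 0"
  by (metis edge_point_nth zero_index zero_neq_one)

lemma finite_card_edge_points:
  assumes "0 < d"
  shows "finite (edge_points d)" "card (edge_points d) \<le> 3 * d"
proof -
  have roots: "finite {z::complex. z^d = - fermat_sign c}" "card {z::complex. z^d = - fermat_sign c} = d" for c
    using assms by (simp_all add: card_nth_roots finite_nth_roots)
  show "finite (edge_points d)"
    unfolding edge_points_def using roots by blast
  have "card (edge_points d) \<le> (\<Sum>c\<in>{2, 3, 4::4}. card (edge_point c ` {z. z^d = - fermat_sign c}))"
    unfolding edge_points_def by (rule card_UN_le) simp
  also have "\<dots> \<le> (\<Sum>c\<in>{2, 3, 4::4}. d)"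
    by (intro sum_mono card_image_le[THEN order_trans]) (simp_all add: roots)
  also have "\<dots> = 3 * d" by simp
  finally show "card (edge_points d) \<le> 3 * d" .
qed

lemma scale_eq_edge_point:
  assumes abc: "distinct [1, c, a, b]" and "v$a = 0" "v$b = 0" "v$c \<noteq> 0"
  shows "(1 / v$c) *s v = edge_point c (v$1 / v$c)"
proof -
  have "((1 / v$c) *s v)$n = edge_point c (v$1 / v$c) $ n" for n
  proof -
    have "n \<in> {1, c, a, b}" using UNIV_4_distinct[OF abc] by blast
    moreover have "c \<noteq> 1" "a \<noteq> 1" "b \<noteq> 1" "a \<noteq> c" "b \<noteq> c" using abc by auto
    ultimately show ?thesis using assms(2-4)
      by (elim insertE emptyE) (simp_all add: edge_point_nth)
  qed
  then show ?thesis unfolding vec_eq_iff by blast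
qed

lemma fermat_scale_to_edge_point:
  assumes v: "fermat d v" "v \<noteq> 0" and ab: "distinct [1, a, b]" "v$a = 0" "v$b = 0"
    and d: "0 < d"
  shows "\<exists>r. r *s v \<in> edge_points d"
proof -
  obtain c where "c \<notin> set [1, a, b]" using ex_fresh_index_4[of "[1, a, b]"] by auto
  then have abc: "distinct [1, c, a, b]" using ab by auto
  have "(\<Sum>n\<in>UNIV. fermat_sign n * (v$n)^d) = 0"
    using v(1) by (simp only: fermat_iff_sum)
  then have "fermat_sign 1 * (v$1)^d + fermat_sign c * (v$c)^d + fermat_sign a * (v$a)^d + fermat_sign b * (v$b)^d = 0"
    by (simp only: sum_UNIV_4_distinct[OF abc])
  then have sum: "(v$1)^d = - fermat_sign c * (v$c)^d"
    using ab(2,3) d by (simp add: fermat_sign_def[of 1] power_0_left eq_neg_iff_add_eq_0)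
  have "v$c \<noteq> 0"
  proof
    assume "v$c = 0"
    then have "v$1 = 0" using sum d by (simp add: power_0_left)
    then show False using v(2) ab(2,3) \<open>v$c = 0\<close> vec_4_eq_0_iff[OF abc, of v] by blast
  qed
  have "c \<in> {2, 3, 4}" using abc exhaust_4[of c] by auto
  moreover have "(v$1 / v$c)^d = - fermat_sign c"
    using sum \<open>v$c \<noteq> 0\<close> by (simp add: power_divide)
  moreover have "(1 / v$c) *s v = edge_point c (v$1 / v$c)"
    using scale_eq_edge_point abc ab(2,3) \<open>v$c \<noteq> 0\<close> .
  ultimately show ?thesis unfolding edge_points_def by blast
qed

lemma fermat_line_meets_edge_points:
  assumes L: "line_on_fermat d L" and d: "3 \<le> d"
  shows "\<exists>w\<in>L. w \<in> edge_points d"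
proof -
  obtain v a b where v: "v \<in> L" "v \<noteq> 0" "distinct [1, a, b]" "v$a = 0" "v$b = 0"
    using fermat_line_meets_edge_through_e1[OF assms] by blast
  obtain p q where L_pq: "L = cspan2 p q"
    using L unfolding line_on_fermat_def proj_line_def by blast
  have "r *s v \<in> L" for r
    using lincomb_in_cspan2[of v p q v r 0] v(1) unfolding L_pq by simp
  moreover obtain r where "r *s v \<in> edge_points d"
    using fermat_scale_to_edge_point v L d unfolding line_on_fermat_def by fastforce
  ultimately show ?thesis by blast
qed

theorem disjoint_fermat_lines_card_le:
  assumes S: "disjoint_lines_on_fermat d S" and d: "3 \<le> d"
  shows "finite S \<and> card S \<le> 3 * d"
proof -
  obtain f where f: "\<And>L. L \<in> S \<Longrightarrow> f L \<in> L \<and> f L \<in> edge_points d"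
    using fermat_line_meets_edge_points[OF _ d] S unfolding disjoint_lines_on_fermat_def by metis
  have inj: "inj_on f S"
  proof
    fix L M assume LM: "L \<in> S" "M \<in> S" "f L = f M"
    have "f L \<noteq> 0"
      using f[OF LM(1)] edge_point_neq_0 unfolding edge_points_def by fastforce
    then show "L = M"
      using S LM f unfolding disjoint_lines_on_fermat_def pairwise_def by (metis IntI singletonD)
  qed
  have image: "f ` S \<subseteq> edge_points d" using f by blast
  have d0: "0 < d" using d by simp
  show ?thesis
  proof
    show "finite S"
      using inj image finite_card_edge_points(1)[OF d0] by (meson finite_imageD finite_subset)
    have "card S \<le> card (edge_points d)"
      using card_inj_on_le[OF inj image finite_card_edge_points(1)[OF d0]] .
    also have "\<dots> \<le> 3 * d" using finite_card_edge_points(2)[OF d0] .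
    finally show "card S \<le> 3 * d" .
  qed
qed

section \<open>Three families of lines through roots of unity\<close>

definition pair_line :: "4 \<Rightarrow> 4 \<Rightarrow> 4 \<Rightarrow> 4 \<Rightarrow> complex \<Rightarrow> complex \<Rightarrow> (complex^4) set" where
  "pair_line i j k l a b = {v. v$i = a * v$j \<and> v$k = b * v$l}"

lemma zero_in_pair_line [simp]: "0 \<in> pair_line i j k l a b"
  by (simp add: pair_line_def)

lemma proj_line_pair_line:
  assumes ijkl: "distinct [i, j, k, l]"
  shows "proj_line (pair_line i j k l a b)"
proof -
  define p where "p = axis i a + axis j 1"
  define q where "q = axis k b + axis l (1::complex)"
  have p: "p$i = a" "p$j = 1" "p$k = 0" "p$l = 0" and q: "q$i = 0" "q$j = 0" "q$k = b" "q$l = 1"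
    using ijkl by (auto simp: p_def q_def axis_def)
  have "pair_line i j k l a b = cspan2 p q"
  proof (intro set_eqI iffI)
    fix v assume v: "v \<in> pair_line i j k l a b"
    have "v$n = (v$j *s p + v$l *s q)$n" for n
    proof -
      have "n \<in> {i, j, k, l}" using UNIV_4_distinct[OF ijkl] by blast
      then show ?thesis
        using v p q by (elim insertE emptyE) (simp_all add: pair_line_def mult.commute)
    qed
    then show "v \<in> cspan2 p q" unfolding cspan2_def vec_eq_iff by blast
  next
    fix v assume "v \<in> cspan2 p q"
    then show "v \<in> pair_line i j k l a b"
      using p q by (auto simp: cspan2_def pair_line_def)
  qed
  moreover have "s = 0 \<and> t = 0" if "s *s p + t *s q = 0" for s t
    using arg_cong[OF that, of "\<lambda>v. v$j"] arg_cong[OF that, of "\<lambda>v. v$l"] p q by simp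
  ultimately show ?thesis unfolding proj_line_def by blast
qed

lemma line_on_fermat_pair_line:
  assumes ijkl: "distinct [i, j, k, l]"
    and "fermat_sign i * a^d + fermat_sign j = 0" "fermat_sign k * b^d + fermat_sign l = 0"
  shows "line_on_fermat d (pair_line i j k l a b)"
proof -
  have "(\<Sum>n\<in>UNIV. fermat_sign n * (v$n)^d)
      = (fermat_sign i * a^d + fermat_sign j) * (v$j)^d + (fermat_sign k * b^d + fermat_sign l) * (v$l)^d"
    if "v \<in> pair_line i j k l a b" for v
    using that unfolding sum_UNIV_4_distinct[OF ijkl] pair_line_def by (simp add: power_mult_distrib algebra_simps)
  then show ?thesis
    using assms proj_line_pair_line[OF ijkl] by (simp add: line_on_fermat_def fermat_iff_sum)
qed

lemma pair_line_Int_pair_line: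
  assumes ijkl: "distinct [i, j, k, l]" and "a \<noteq> a'" "b \<noteq> b'"
  shows "pair_line i j k l a b \<inter> pair_line i j k l a' b' = {0}"
proof -
  have "v = 0" if "v \<in> pair_line i j k l a b" "v \<in> pair_line i j k l a' b'" for v
  proof -
    have "(a - a') * v$j = 0" "(b - b') * v$l = 0"
      using that by (auto simp: pair_line_def algebra_simps)
    then have "v$j = 0" "v$l = 0" using assms by auto
    moreover from this have "v$i = 0" "v$k = 0" using that by (simp_all add: pair_line_def)
    ultimately show "v = 0" using vec_4_eq_0_iff[OF ijkl, of v] by blast
  qed
  then show ?thesis by auto
qed

lemma pair_line_Int_12_13:
  assumes "a * b' \<noteq> a' * b"
  shows "pair_line 1 2 3 4 a b \<inter> pair_line 1 3 2 4 a' b' = {0}"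
proof -
  have "v = 0" if "v \<in> pair_line 1 2 3 4 a b" "v \<in> pair_line 1 3 2 4 a' b'" for v
  proof -
    from that have v: "v$1 = a * v$2" "v$3 = b * v$4" "v$1 = a' * v$3" "v$2 = b' * v$4"
      by (auto simp: pair_line_def)
    then have "(a * b' - a' * b) * v$4 = 0" by (auto simp: algebra_simps)
    then have "v$4 = 0" using assms by auto
    then show "v = 0" using v by (simp add: vec_eq_iff forall_4)
  qed
  then show ?thesis by auto
qed

lemma pair_line_Int_12_14:
  assumes "a * b * b' \<noteq> a'"
  shows "pair_line 1 2 3 4 a b \<inter> pair_line 1 4 2 3 a' b' = {0}"
proof -
  have "v = 0" if "v \<in> pair_line 1 2 3 4 a b" "v \<in> pair_line 1 4 2 3 a' b'" for v
  proof -
    from that have v: "v$1 = a * v$2" "v$3 = b * v$4" "v$1 = a' * v$4" "v$2 = b' * v$3"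
      by (auto simp: pair_line_def)
    then have "(a * b * b' - a') * v$4 = 0" by (auto simp: algebra_simps)
    then have "v$4 = 0" using assms by auto
    then show "v = 0" using v by (simp add: vec_eq_iff forall_4)
  qed
  then show ?thesis by auto
qed

lemma pair_line_Int_13_14:
  assumes "a \<noteq> 0" "a' \<noteq> 0" "a * b \<noteq> a' * b'"
  shows "pair_line 1 3 2 4 a b \<inter> pair_line 1 4 2 3 a' b' = {0}"
proof -
  have "v = 0" if "v \<in> pair_line 1 3 2 4 a b" "v \<in> pair_line 1 4 2 3 a' b'" for v
  proof -
    from that have v: "v$1 = a * v$3" "v$2 = b * v$4" "v$1 = a' * v$4" "v$2 = b' * v$3"
      by (auto simp: pair_line_def)
    have "(a * b - a' * b') * (v$3 * v$4) = (a * v$3) * (b * v$4) - (a' * v$4) * (b' * v$3)"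
      by (simp add: algebra_simps)
    also have "\<dots> = 0" using v by simp
    finally have "v$3 = 0 \<or> v$4 = 0" using assms by simp
    then have "v$3 = 0" "v$4 = 0" using v assms by auto
    then show "v = 0" using v by (simp add: vec_eq_iff forall_4)
  qed
  then show ?thesis by auto
qed

definition unity_root :: "nat \<Rightarrow> int \<Rightarrow> complex" where
  "unity_root d k = exp (2 * of_real pi * \<i> * of_int k / of_nat d)"

lemma unity_root_add: "unity_root d (a + b) = unity_root d a * unity_root d b"
  unfolding unity_root_def by (simp add: exp_add[symmetric] algebra_simps add_divide_distrib)

lemma unity_root_neq_0 [simp]: "unity_root d k \<noteq> 0"
  by (simp add: unity_root_def)

lemma unity_root_pow:
  assumes "0 < d"
  shows "unity_root d k ^ d = 1"
proof -
  have "unity_root d k ^ d = exp (of_nat d * (2 * of_real pi * \<i> * of_int k / of_nat d))"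
    unfolding unity_root_def by (simp only: exp_of_nat_mult)
  also have "\<dots> = exp (\<i> * (of_int k * (of_real pi * 2)))"
    using assms by (simp add: field_simps)
  also have "\<dots> = 1" by simp
  finally show ?thesis .
qed

lemma unity_root_eq_1_iff:
  assumes "0 < d"
  shows "unity_root d k = 1 \<longleftrightarrow> int d dvd k"
proof -
  have "unity_root d k = 1 \<longleftrightarrow> (\<exists>n::int. 2 * pi * of_int k / of_nat d = of_int (2 * n) * pi)"
    unfolding unity_root_def exp_eq_1 using assms by (simp add: Re_divide Im_divide power2_eq_square)
  also have "\<dots> \<longleftrightarrow> (\<exists>n::int. of_int k = of_int n * (of_nat d::real))"
    using assms by (auto simp: field_simps)
  also have "\<dots> \<longleftrightarrow> (\<exists>n::int. k = n * int d)"
    by (metis of_int_eq_iff of_int_mult of_int_of_nat_eq)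
  also have "\<dots> \<longleftrightarrow> int d dvd k" by (auto simp: dvd_def mult.commute)
  finally show ?thesis .
qed

lemma unity_root_eq_iff:
  assumes "0 < d"
  shows "unity_root d a = unity_root d b \<longleftrightarrow> a mod int d = b mod int d"
proof -
  have "unity_root d a = unity_root d (a - b) * unity_root d b"
    by (simp flip: unity_root_add)
  then have "unity_root d a = unity_root d b \<longleftrightarrow> unity_root d (a - b) = 1" by auto
  then show ?thesis by (simp add: unity_root_eq_1_iff[OF assms] mod_eq_dvd_iff)
qed

lemma disjoint_lines_of_family:
  assumes "finite I" and lines: "\<And>i. i \<in> I \<Longrightarrow> line_on_fermat d (F i)"
    and disj: "\<And>i j. i \<in> I \<Longrightarrow> j \<in> I \<Longrightarrow> i \<noteq> j \<Longrightarrow> F i \<inter> F j = {0}"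
  shows "disjoint_lines_on_fermat d (F ` I) \<and> finite (F ` I) \<and> card (F ` I) = card I"
proof -
  have "F i \<noteq> {0}" if i: "i \<in> I" for i
  proof -
    obtain p q where indep: "\<forall>a b. a *s p + b *s q = 0 \<longrightarrow> a = 0 \<and> b = 0" and "F i = cspan2 p q"
      using lines[OF i] unfolding line_on_fermat_def proj_line_def by blast
    moreover have "p = 1 *s p + 0 *s q" by simp
    ultimately have "p \<in> F i" unfolding cspan2_def by blast
    moreover have "p \<noteq> 0" using indep[rule_format, of 1 0] by auto
    ultimately show ?thesis by blast
  qed
  then have "inj_on F I"
    using disj by (metis Int_absorb inj_onI)
  moreover have "disjoint_lines_on_fermat d (F ` I)"
    unfolding disjoint_lines_on_fermat_def pairwise_def
  proof (intro conjI ballI impI)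
    show "line_on_fermat d L" if "L \<in> F ` I" for L using that lines by blast
    show "L \<inter> M = {0}" if "L \<in> F ` I" "M \<in> F ` I" "L \<noteq> M" for L M
      using that disj by blast
  qed
  ultimately show ?thesis using \<open>finite I\<close> by (simp add: card_image)
qed

definition family_line :: "nat \<Rightarrow> nat \<Rightarrow> int \<times> int \<Rightarrow> (complex^4) set" where
  "family_line d k e = (case k of
      0 \<Rightarrow> pair_line 1 2 3 4 (unity_root d (fst e)) (unity_root d (snd e))
    | Suc 0 \<Rightarrow> pair_line 1 3 2 4 (unity_root d (fst e)) (unity_root d (snd e))
    | _ \<Rightarrow> pair_line 1 4 2 3 (- unity_root d (fst e)) (- unity_root d (snd e)))"

lemma family_line_cases:
  obtains "k = 0" "family_line d k e = pair_line 1 2 3 4 (unity_root d (fst e)) (unity_root d (snd e))"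
  | "k = 1" "family_line d k e = pair_line 1 3 2 4 (unity_root d (fst e)) (unity_root d (snd e))"
  | "k \<ge> 2" "family_line d k e = pair_line 1 4 2 3 (- unity_root d (fst e)) (- unity_root d (snd e))"
proof (cases k)
  case 0
  then show ?thesis using that(1) by (simp add: family_line_def)
next
  case (Suc n)
  then show ?thesis using that(2,3) by (cases n) (simp_all add: family_line_def)
qed

lemma line_on_fermat_family_line:
  assumes "odd d"
  shows "line_on_fermat d (family_line d k e)"
proof -
  have d: "0 < d" using assms by (simp add: odd_pos)
  have roots: "unity_root d a ^ d = 1" "(- unity_root d a) ^ d = -1" for a
    using unity_root_pow[OF d] assms by (simp_all)
  have signs: "fermat_sign 1 = 1" "fermat_sign 2 = -1" "fermat_sign 3 = -1" "fermat_sign 4 = 1"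
    by (simp_all add: fermat_sign_def)
  show ?thesis
    by (rule family_line_cases[of k d e]) (auto intro!: line_on_fermat_pair_line simp: roots signs)
qed

lemma family_line_Int_same:
  assumes "0 < d" "fst e mod int d \<noteq> fst e' mod int d" "snd e mod int d \<noteq> snd e' mod int d"
  shows "family_line d k e \<inter> family_line d k e' = {0}"
proof -
  have ne: "unity_root d (fst e) \<noteq> unity_root d (fst e')" "unity_root d (snd e) \<noteq> unity_root d (snd e')"
    using assms unity_root_eq_iff by blast+
  show ?thesis
    by (rule family_line_cases[of k d e]; rule family_line_cases[of k d e'])
      (use ne in \<open>simp_all add: pair_line_Int_pair_line\<close>)
qed

lemma family_line_Int_01:
  assumes "0 < d" "(snd e - fst e) mod int d \<noteq> (snd e' - fst e') mod int d"
  shows "family_line d 0 e \<inter> family_line d 1 e' = {0}"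
proof -
  have "(fst e + snd e') mod int d \<noteq> (fst e' + snd e) mod int d"
    using assms(2) by (simp add: mod_eq_dvd_iff) (smt (verit) dvd_minus_iff)
  then have "unity_root d (fst e) * unity_root d (snd e') \<noteq> unity_root d (fst e') * unity_root d (snd e)"
    using unity_root_eq_iff[OF assms(1)] by (simp flip: unity_root_add)
  then show ?thesis unfolding family_line_def by (simp add: pair_line_Int_12_13)
qed

lemma family_line_Int_02:
  assumes "0 < d" "(fst e + snd e) mod int d \<noteq> (fst e' - snd e') mod int d"
  shows "family_line d 0 e \<inter> family_line d 2 e' = {0}"
proof -
  have "(fst e + snd e + snd e') mod int d \<noteq> fst e' mod int d"
    using assms(2) by (simp add: mod_eq_dvd_iff algebra_simps)
  then have "unity_root d (fst e) * unity_root d (snd e) * - unity_root d (snd e') \<noteq> - unity_root d (fst e')"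
    using unity_root_eq_iff[OF assms(1)] by (simp flip: unity_root_add)
  then show ?thesis unfolding family_line_def by (simp add: pair_line_Int_12_14 numeral_2_eq_2)
qed

lemma family_line_Int_12:
  assumes "0 < d" "(fst e + snd e) mod int d \<noteq> (fst e' + snd e') mod int d"
  shows "family_line d 1 e \<inter> family_line d 2 e' = {0}"
proof -
  have "unity_root d (fst e) * unity_root d (snd e) \<noteq> - unity_root d (fst e') * - unity_root d (snd e')"
    using assms unity_root_eq_iff[OF assms(1)] by (simp flip: unity_root_add)
  then show ?thesis unfolding family_line_def by (simp add: pair_line_Int_13_14 numeral_2_eq_2)
qed

text \<open>A pair (a, b) in the family A, B or C stands for the line family_line d 0, 1 or 2
  (a, b); the three congruence conditions are the disjointness criteria
  family_line_Int_01, family_line_Int_02 and family_line_Int_12.\<close>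

definition exponent_design :: "nat \<Rightarrow> (nat \<Rightarrow> int \<times> int) \<Rightarrow> (nat \<Rightarrow> int \<times> int) \<Rightarrow> (nat \<Rightarrow> int \<times> int) \<Rightarrow> bool" where
  "exponent_design d A B C \<longleftrightarrow>
     (\<forall>F\<in>{A, B, C}. inj_on (\<lambda>x. fst (F x) mod int d) {..<d} \<and> inj_on (\<lambda>x. snd (F x) mod int d) {..<d}) \<and>
     (\<forall>x<d. \<forall>y<d.
        (snd (A x) - fst (A x)) mod int d \<noteq> (snd (B y) - fst (B y)) mod int d \<and>
        (fst (A x) + snd (A x)) mod int d \<noteq> (fst (C y) - snd (C y)) mod int d \<and>
        (fst (B x) + snd (B x)) mod int d \<noteq> (fst (C y) + snd (C y)) mod int d)"

lemma exponent_design_cross_disjoint: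
  assumes d: "0 < d" and design: "exponent_design d A B C"
    and "x < d" "y < d" "k < l" "l < 3"
  shows "family_line d k (([A, B, C] ! k) x) \<inter> family_line d l (([A, B, C] ! l) y) = {0}"
proof -
  consider "k = 0" "l = 1" | "k = 0" "l = 2" | "k = 1" "l = 2" using \<open>k < l\<close> \<open>l < 3\<close> by linarith
  moreover have c:
    "(snd (A x) - fst (A x)) mod int d \<noteq> (snd (B y) - fst (B y)) mod int d"
    "(fst (A x) + snd (A x)) mod int d \<noteq> (fst (C y) - snd (C y)) mod int d"
    "(fst (B x) + snd (B x)) mod int d \<noteq> (fst (C y) + snd (C y)) mod int d"
    using design \<open>x < d\<close> \<open>y < d\<close> unfolding exponent_design_def by blast+
  ultimately show ?thesis
    using family_line_Int_01[OF d c(1)] family_line_Int_02[OF d c(2)] family_line_Int_12[OF d c(3)]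
    by cases simp_all
qed

lemma exponent_design_same_disjoint:
  assumes d: "0 < d" and design: "exponent_design d A B C"
    and "x < d" "y < d" "x \<noteq> y" "k < 3"
  shows "family_line d k (([A, B, C] ! k) x) \<inter> family_line d k (([A, B, C] ! k) y) = {0}"
proof -
  have "fst (G x) mod int d \<noteq> fst (G y) mod int d \<and> snd (G x) mod int d \<noteq> snd (G y) mod int d"
    if "G \<in> {A, B, C}" for G
    using design that assms(3-5) unfolding exponent_design_def inj_on_def by blast
  moreover have "[A, B, C] ! k \<in> {A, B, C}" using \<open>k < 3\<close> by (simp add: less_Suc_eq nth_Cons')
  ultimately show ?thesis using d by (simp add: family_line_Int_same)
qed

lemma exponent_design_disjoint_lines:
  assumes d: "odd d" and design: "exponent_design d A B C"
  shows "\<exists>S. disjoint_lines_on_fermat d S \<and> finite S \<and> card S = 3 * d"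
proof -
  define F where "F = (\<lambda>(x, k). family_line d k (([A, B, C] ! k) x))"
  define I where "I = {..<d} \<times> {..<3::nat}"
  have d0: "0 < d" using d by (simp add: odd_pos)
  have "F (x, k) \<inter> F (y, l) = {0}" if "(x, k) \<in> I" "(y, l) \<in> I" "(x, k) \<noteq> (y, l)" for x k y l
  proof (cases k l rule: linorder_cases)
    case less
    then show ?thesis using exponent_design_cross_disjoint[OF d0 design] that by (simp add: F_def I_def)
  next
    case greater
    then show ?thesis
      using exponent_design_cross_disjoint[OF d0 design, of y x l k] that by (simp add: F_def I_def Int_commute)
  next
    case equal
    then show ?thesis using exponent_design_same_disjoint[OF d0 design] that by (simp add: F_def I_def)
  qed
  moreover have "line_on_fermat d (F i)" for i
    using line_on_fermat_family_line[OF d] by (simp add: F_def split: prod.split)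
  moreover have "finite I" "card I = 3 * d" by (simp_all add: I_def card_cartesian_product)
  ultimately show ?thesis using disjoint_lines_of_family[of I d F] by (metis surj_pair)
qed

section \<open>Exponent designs for d = 7 and for odd d \<ge> 9\<close>

definition design7_A :: "nat \<Rightarrow> int \<times> int" where
  "design7_A x = (int x, [0, 1, 2, 4, 3, 6, 5] ! x)"

definition design7_B :: "nat \<Rightarrow> int \<times> int" where
  "design7_B x = (int x, [2, 4, 6, 5, 1, 0, 3] ! x)"

definition design7_C :: "nat \<Rightarrow> int \<times> int" where
  "design7_C x = (int x, [4, 2, 1, 0, 3, 6, 5] ! x)"

lemma exponent_design_7: "exponent_design 7 design7_A design7_B design7_C"
proof -
  have less7: "x < 7 \<longleftrightarrow> x \<in> {0, 1, 2, 3, 4, 5, 6}" for x :: nat by auto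
  have "{..<7::nat} = {0, 1, 2, 3, 4, 5, 6}" by auto
  then show ?thesis
    unfolding exponent_design_def inj_on_def design7_A_def design7_B_def design7_C_def less7
    by simp
qed

definition cycle_top4 :: "int \<Rightarrow> int \<Rightarrow> int" where
  "cycle_top4 d x = (if x < d - 4 then x else if x = d - 4 then d - 1 else x - 1)"

definition cycle_upper :: "int \<Rightarrow> int \<Rightarrow> int" where
  "cycle_upper m x = (if x < m - 1 then x else if x < 2*m then x + 1 else m - 1)"

definition B_offset1 :: "int \<Rightarrow> int" where
  "B_offset1 m = (if m mod 4 = 0 then -2 else if m mod 4 = 1 then m else if m mod 4 = 2 then m else 0)"

definition B_offset2 :: "int \<Rightarrow> int" where
  "B_offset2 m = (if m mod 4 = 0 then 0 else if m mod 4 = 1 then m+1 else if m mod 4 = 2 then m+2 else 1)"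

text \<open>The expressions in the three lemmas below lie strictly between -10 d and 10 d for
  d = 2 m + 1, so divisibility by d leaves 19 linear equations, which fail in every branch of
  the case distinctions (and for every residue of m modulo 4).\<close>

lemma dvd_within_ten_multiples:
  fixes d e :: int
  assumes "0 < d" "d dvd e" "- (10*d) < e" "e < 10*d"
  shows "e = -9*d \<or> e = -8*d \<or> e = -7*d \<or> e = -6*d \<or> e = -5*d \<or> e = -4*d \<or> e = -3*d \<or> e = -2*d
    \<or> e = -d \<or> e = 0 \<or> e = d \<or> e = 2*d \<or> e = 3*d \<or> e = 4*d \<or> e = 5*d \<or> e = 6*d \<or> e = 7*d \<or> e = 8*d \<or> e = 9*d"
proof -
  obtain k where k: "e = d * k" using assms(2) by (auto simp: dvd_def)
  have "d * k < d * 10" using assms(4) k by (simp add: mult.commute)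
  then have "k < 10" using assms(1) by simp
  have "d * (-10) < d * k" using assms(3) k by (simp add: mult.commute)
  then have "-10 < k" using assms(1) by (simp only: mult_less_cancel_left_pos)
  have "k = -9 \<or> k = -8 \<or> k = -7 \<or> k = -6 \<or> k = -5 \<or> k = -4 \<or> k = -3 \<or> k = -2 \<or> k = -1 \<or> k = 0
    \<or> k = 1 \<or> k = 2 \<or> k = 3 \<or> k = 4 \<or> k = 5 \<or> k = 6 \<or> k = 7 \<or> k = 8 \<or> k = 9"
    using \<open>k < 10\<close> \<open>-10 < k\<close> by presburger
  then show ?thesis using k by (auto simp: algebra_simps)
qed

lemma large_design_AB_ndvd:
  fixes m x y :: int
  assumes "4 \<le> m" "0 \<le> x" "x \<le> 2*m" "0 \<le> y" "y \<le> 2*m"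
  shows "\<not> (2*m+1) dvd (cycle_top4 (2*m+1) x - x - (2 * cycle_upper m y + B_offset2 m) + (-2*y + B_offset1 m))"
proof
  define e where "e = cycle_top4 (2*m+1) x - x - (2 * cycle_upper m y + B_offset2 m) + (-2*y + B_offset1 m)"
  assume "(2*m+1) dvd (cycle_top4 (2*m+1) x - x - (2 * cycle_upper m y + B_offset2 m) + (-2*y + B_offset1 m))"
  then have dv: "(2*m+1) dvd e" by (simp add: e_def)
  have pos: "0 < 2*m+1" using assms(1) by simp
  have "- (10*(2*m+1)) < e" "e < 10*(2*m+1)"
    using assms unfolding e_def cycle_top4_def cycle_upper_def B_offset1_def B_offset2_def by auto
  note multiples = dvd_within_ten_multiples[OF pos dv this]
  have "m mod 4 = 0 \<or> m mod 4 = 1 \<or> m mod 4 = 2 \<or> m mod 4 = 3" by presburger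
  then show False
    using multiples assms unfolding e_def cycle_top4_def cycle_upper_def B_offset1_def B_offset2_def
    by (auto split: if_splits) presburger+
qed

lemma large_design_AC_ndvd:
  fixes m x y :: int
  assumes "4 \<le> m" "0 \<le> x" "x \<le> 2*m" "0 \<le> y" "y \<le> 2*m"
  shows "\<not> (2*m+1) dvd (x + cycle_top4 (2*m+1) x + (4 * cycle_upper m y + 4) - 4 * y)"
proof
  define e where "e = x + cycle_top4 (2*m+1) x + (4 * cycle_upper m y + 4) - 4 * y"
  assume "(2*m+1) dvd (x + cycle_top4 (2*m+1) x + (4 * cycle_upper m y + 4) - 4 * y)"
  then have dv: "(2*m+1) dvd e" by (simp add: e_def)
  have pos: "0 < 2*m+1" using assms(1) by simp
  have "- (10*(2*m+1)) < e" "e < 10*(2*m+1)"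
    using assms unfolding e_def cycle_top4_def cycle_upper_def by auto
  note multiples = dvd_within_ten_multiples[OF pos dv this]
  then show False
    using assms unfolding e_def cycle_top4_def cycle_upper_def
    by (auto split: if_splits) presburger+
qed

lemma large_design_BC_ndvd:
  fixes m x y :: int
  assumes "4 \<le> m" "0 \<le> x" "x \<le> 2*m" "0 \<le> y" "y \<le> 2*m"
  shows "\<not> (2*m+1) dvd ((-2*x + B_offset1 m) + (2 * cycle_upper m x + B_offset2 m) - 4 * y - (4 * cycle_upper m y + 4))"
proof
  define e where "e = (-2*x + B_offset1 m) + (2 * cycle_upper m x + B_offset2 m) - 4 * y - (4 * cycle_upper m y + 4)"
  assume "(2*m+1) dvd ((-2*x + B_offset1 m) + (2 * cycle_upper m x + B_offset2 m) - 4 * y - (4 * cycle_upper m y + 4))"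
  then have dv: "(2*m+1) dvd e" by (simp add: e_def)
  have pos: "0 < 2*m+1" using assms(1) by simp
  have "- (10*(2*m+1)) < e" "e < 10*(2*m+1)"
    using assms unfolding e_def cycle_top4_def cycle_upper_def B_offset1_def B_offset2_def by auto
  note multiples = dvd_within_ten_multiples[OF pos dv this]
  have "m mod 4 = 0 \<or> m mod 4 = 1 \<or> m mod 4 = 2 \<or> m mod 4 = 3" by presburger
  then show False
    using multiples assms unfolding e_def cycle_upper_def B_offset1_def B_offset2_def
    by (auto split: if_splits) presburger+
qed

lemma inj_on_cycle_top4: "inj_on (\<lambda>x. cycle_top4 (int d) (int x)) {..<d}"
  unfolding inj_on_def cycle_top4_def by auto

lemma cycle_top4_range: "4 \<le> d \<Longrightarrow> x < d \<Longrightarrow> 0 \<le> cycle_top4 (int d) (int x) \<and> cycle_top4 (int d) (int x) < int d"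
  unfolding cycle_top4_def by auto

lemma inj_on_cycle_upper: "int d = 2*m + 1 \<Longrightarrow> inj_on (\<lambda>x. cycle_upper m (int x)) {..<d}"
  unfolding inj_on_def cycle_upper_def by auto

lemma cycle_upper_range:
  "int d = 2*m + 1 \<Longrightarrow> 1 \<le> m \<Longrightarrow> x < d \<Longrightarrow> 0 \<le> cycle_upper m (int x) \<and> cycle_upper m (int x) < int d"
  unfolding cycle_upper_def by auto

lemma inj_on_mod_affine:
  fixes f g :: "nat \<Rightarrow> int" and c t :: int
  assumes "coprime (int d) c" "inj_on f {..<d}" "\<And>x. x < d \<Longrightarrow> 0 \<le> f x \<and> f x < int d"
    and "\<And>x. x < d \<Longrightarrow> g x = c * f x + t"
  shows "inj_on (\<lambda>x. g x mod int d) {..<d}"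
proof (rule inj_onI)
  fix x y assume x: "x \<in> {..<d}" and y: "y \<in> {..<d}" and "g x mod int d = g y mod int d"
  then have "int d dvd c * (f x - f y)"
    using assms(4) by (simp add: mod_eq_dvd_iff algebra_simps)
  then have "int d dvd f x - f y"
    using coprime_dvd_mult_right_iff[OF assms(1)] by blast
  moreover have "\<bar>f x - f y\<bar> < int d"
    using assms(3)[of x] assms(3)[of y] x y by (simp add: abs_less_iff)
  ultimately have "f x - f y = 0"
    using dvd_imp_le_int[of "f x - f y" "int d"] by fastforce
  then show "x = y" using assms(2) x y by (simp add: inj_on_eq_iff)
qed

definition large_design_A :: "int \<Rightarrow> nat \<Rightarrow> int \<times> int" where
  "large_design_A m x = (int x, cycle_top4 (2*m+1) (int x))"

definition large_design_B :: "int \<Rightarrow> nat \<Rightarrow> int \<times> int" where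
  "large_design_B m x = (-2 * int x + B_offset1 m, 2 * cycle_upper m (int x) + B_offset2 m)"

definition large_design_C :: "int \<Rightarrow> nat \<Rightarrow> int \<times> int" where
  "large_design_C m x = (4 * int x, 4 * cycle_upper m (int x) + 4)"

lemma exponent_design_large:
  assumes dm: "int d = 2*m + 1" and m: "4 \<le> m"
  shows "exponent_design d (large_design_A m) (large_design_B m) (large_design_C m)"
proof -
  have "odd (int d)" using dm by simp
  then have cop: "coprime (int d) 1" "coprime (int d) (-2)" "coprime (int d) 2" "coprime (int d) 4"
    using coprime_power_right_iff[of "int d" 2 2] by (simp_all add: coprime_right_2_iff_odd)
  have range: "0 \<le> int x" "int x \<le> 2*m" if "x < d" for x using that dm by simp_all
  have id_range: "0 \<le> int x \<and> int x < int d" if "x < d" for x using that by simp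
  have top4_range: "0 \<le> cycle_top4 (int d) (int x) \<and> cycle_top4 (int d) (int x) < int d" if "x < d" for x
    using cycle_top4_range[of d x] that dm m by simp
  have upper_range: "0 \<le> cycle_upper m (int x) \<and> cycle_upper m (int x) < int d" if "x < d" for x
    using cycle_upper_range[OF dm _ that] m by simp
  have AB: "(snd (large_design_A m x) - fst (large_design_A m x)) mod int d
      \<noteq> (snd (large_design_B m y) - fst (large_design_B m y)) mod int d" if "x < d" "y < d" for x y
    using large_design_AB_ndvd[OF m range[OF that(1)] range[OF that(2)]] dm
    by (simp add: large_design_A_def large_design_B_def mod_eq_dvd_iff algebra_simps)
  have AC: "(fst (large_design_A m x) + snd (large_design_A m x)) mod int d
      \<noteq> (fst (large_design_C m y) - snd (large_design_C m y)) mod int d" if "x < d" "y < d" for x y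
    using large_design_AC_ndvd[OF m range[OF that(1)] range[OF that(2)]] dm
    by (simp add: large_design_A_def large_design_C_def mod_eq_dvd_iff algebra_simps)
  have BC: "(fst (large_design_B m x) + snd (large_design_B m x)) mod int d
      \<noteq> (fst (large_design_C m y) + snd (large_design_C m y)) mod int d" if "x < d" "y < d" for x y
    using large_design_BC_ndvd[OF m range[OF that(1)] range[OF that(2)]] dm
    by (simp add: large_design_B_def large_design_C_def mod_eq_dvd_iff algebra_simps)
  have "inj_on (\<lambda>x. fst (large_design_A m x) mod int d) {..<d}"
    by (rule inj_on_mod_affine[OF cop(1) inj_on_of_nat id_range]) (simp_all add: large_design_A_def)
  moreover have "inj_on (\<lambda>x. snd (large_design_A m x) mod int d) {..<d}"
    by (rule inj_on_mod_affine[OF cop(1) inj_on_cycle_top4 top4_range]) (simp_all add: large_design_A_def dm)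
  moreover have "inj_on (\<lambda>x. fst (large_design_B m x) mod int d) {..<d}"
    by (rule inj_on_mod_affine[OF cop(2) inj_on_of_nat id_range]) (simp_all add: large_design_B_def)
  moreover have "inj_on (\<lambda>x. snd (large_design_B m x) mod int d) {..<d}"
    by (rule inj_on_mod_affine[OF cop(3) inj_on_cycle_upper[OF dm] upper_range]) (simp_all add: large_design_B_def)
  moreover have "inj_on (\<lambda>x. fst (large_design_C m x) mod int d) {..<d}"
    by (rule inj_on_mod_affine[OF cop(4) inj_on_of_nat id_range]) (simp_all add: large_design_C_def)
  moreover have "inj_on (\<lambda>x. snd (large_design_C m x) mod int d) {..<d}"
    by (rule inj_on_mod_affine[OF cop(4) inj_on_cycle_upper[OF dm] upper_range]) (simp_all add: large_design_C_def)
  ultimately show ?thesis unfolding exponent_design_def using AB AC BC by simp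
qed

theorem corollary4p6:
  fixes d :: nat
  assumes "odd d" and "d \<ge> 7"
  shows "(\<exists>S. disjoint_lines_on_fermat d S \<and> finite S \<and> card S = 3 * d)
       \<and> (\<forall>S. disjoint_lines_on_fermat d S \<longrightarrow> finite S \<and> card S \<le> 3 * d)"
proof
  show "\<exists>S. disjoint_lines_on_fermat d S \<and> finite S \<and> card S = 3 * d"
  proof (cases "d = 7")
    case True
    then show ?thesis using exponent_design_disjoint_lines[OF _ exponent_design_7] by simp
  next
    case False
    obtain k where "d = 2 * k + 1" using \<open>odd d\<close> by (rule oddE)
    then have dm: "int d = 2 * int k + 1" and "4 \<le> int k" using False \<open>d \<ge> 7\<close> by simp_all
    then show ?thesis
      using exponent_design_disjoint_lines[OF \<open>odd d\<close> exponent_design_large] by blast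
  qed
  show "\<forall>S. disjoint_lines_on_fermat d S \<longrightarrow> finite S \<and> card S \<le> 3 * d"
    using disjoint_fermat_lines_card_le \<open>d \<ge> 7\<close> by simp
qed

end
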